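(* For all $1\le a\le n$, $S_a\cdot L(u)=0$, i.e. every coefficient of the formal power series $L(u)$ in $D$ is annihilated by $S_a$.
   Context: Fix $n\ge2$. Let $Q_a(u)$ ($1\le a\le n$, $u\in\mathbb C$) be algebraically independent commuting indeterminates, $\mathcal Q=\mathbb Z[Q_a(u)^{\pm1}]$. Bilinear form of type $B_n$: $(\alpha_a|\alpha_a)=d_a:=2-\delta_{an}$, $(\alpha_a|\alpha_{a+1})=(\alpha_{a+1}|\alpha_a)=-1$ for $1\le a\le n-1$, $(\alpha_a|\alpha_b)=0$ if $|a-b|\ge2$. Put $Y_a(u)=Q_a(u-\frac{d_a}2)/Q_a(u+\frac{d_a}2)$, $Y_0(u)=1$, $\mathcal Y=\mathbb Z[Y_a(u)^{\pm1}]$. Define $z_a(u)=\frac{Y_a(u+a)}{Y_{a-1}(u+a+1)}$, $z_{\bar a}(u)=\frac{Y_{a-1}(u+2n-a)}{Y_a(u+2n-a+1)}$ for $1\le a\le n-1$; $z_n(u)=\frac{Y_n(u+\frac{2n+1}2)Y_n(u+\frac{2n-1}2)}{Y_{n-1}(u+n+1)}$, $z_{\bar n}(u)=\frac{Y_{n-1}(u+n)}{Y_n(u+\frac{2n+3}2)Y_n(u+\frac{2n+1}2)}$, $z_0(u)=\frac{Y_n(u+\frac{2n-1}2)}{Y_n(u+\frac{2n+3}2)}$. Work in the ring of formal power series $\sum_{j\ge0}c_j(u)D^j$ with $c_j(u)\in\mathcal Y$ and $D\,c(u)=c(u+1)D$; define \[ L(u)=(1-z_{\bar1}(u)D^2)\cdots(1-z_{\bar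 n}(u)D^2)\,(1+z_0(u)D^2)^{-1}\,(1-z_n(u)D^2)\cdots(1-z_1(u)D^2), \] where $(1+z_0(u)D^2)^{-1}=\sum_{k\ge0}(-z_0(u)D^2)^k$. Screening: let $A_a(u)=\prod_{b=1}^n\frac{Q_b(u-(\alpha_a|\alpha_b))}{Q_b(u+(\alpha_a|\alpha_b))}$; let $\mathcal S$ be the commutative ring generated over $\mathcal Q$ by symbols $S_a(u)$ subject to $S_a(u+d_a)=A_a(u+\frac{d_a}2)S_a(u)$. $S_a:\mathcal Y\to\mathcal S$ is the additive map obeying the Leibniz rule with $S_a\cdot Y_b(u)=\delta_{ab}Y_b(u)S_b(u)$; it acts on power series in $D$ coefficientwise. *)

theory Defs
  imports Complex_Main "HOL-Library.Poly_Mapping"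
begin

text \<open>The ring Q = Z[Q_a(u)^{+-1}] of Laurent polynomials in the algebraically independent
  indeterminates Q_a(u) (a a natural number, u complex): group ring of the free abelian group
  of exponent vectors.\<close>

type_synonym lmon = "(nat \<times> complex) \<Rightarrow>\<^sub>0 int"
type_synonym lpoly = "lmon \<Rightarrow>\<^sub>0 int"

definition lm :: "lmon \<Rightarrow> lpoly" where
  "lm e = Poly_Mapping.single e 1"

definition Qp :: "nat \<Rightarrow> complex \<Rightarrow> int \<Rightarrow> lpoly" where
  "Qp a u k = lm (Poly_Mapping.single (a, u) k)"

definition dd :: "nat \<Rightarrow> nat \<Rightarrow> complex" where
  "dd n a = (if a = n then 1 else 2)"

text \<open>Bilinear form of type B_n on simple roots (indices 1..n)\<close>
definition Bform :: "nat \<Rightarrow> nat \<Rightarrow> nat \<Rightarrow> int" where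
  "Bform n a b = (if a = b then (if a = n then 1 else 2)
                  else if a = b + 1 \<or> b = a + 1 then -1 else 0)"

text \<open>Y_a(u)^k = (Q_a(u - d_a/2) / Q_a(u + d_a/2))^k, with Y_0 = 1\<close>
definition Yp :: "nat \<Rightarrow> nat \<Rightarrow> complex \<Rightarrow> int \<Rightarrow> lpoly" where
  "Yp n a u k = (if a = 0 then 1
     else lm (Poly_Mapping.single (a, u - dd n a / 2) k + Poly_Mapping.single (a, u + dd n a / 2) (-k)))"

inductive_set Yring :: "nat \<Rightarrow> lpoly set" for n where
  one: "1 \<in> Yring n"
| gen: "1 \<le> a \<Longrightarrow> a \<le> n \<Longrightarrow> Yp n a u 1 \<in> Yring n"
| geninv: "1 \<le> a \<Longrightarrow> a \<le> n \<Longrightarrow> Yp n a u (-1) \<in> Yring n"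
| add: "x \<in> Yring n \<Longrightarrow> y \<in> Yring n \<Longrightarrow> x + y \<in> Yring n"
| neg: "x \<in> Yring n \<Longrightarrow> - x \<in> Yring n"
| mult: "x \<in> Yring n \<Longrightarrow> y \<in> Yring n \<Longrightarrow> x * y \<in> Yring n"

definition Aa :: "nat \<Rightarrow> nat \<Rightarrow> complex \<Rightarrow> lpoly" where
  "Aa n a u = (\<Prod>b\<in>{1..n}. Qp b (u - of_int (Bform n a b)) 1 * Qp b (u + of_int (Bform n a b)) (-1))"

definition zA :: "nat \<Rightarrow> nat \<Rightarrow> complex \<Rightarrow> lpoly" where
  "zA n a u = (if a = n then
       Yp n n (u + (2 * of_nat n + 1) / 2) 1 * Yp n n (u + (2 * of_nat n - 1) / 2) 1
         * Yp n (n - 1) (u + of_nat n + 1) (-1)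
     else Yp n a (u + of_nat a) 1 * Yp n (a - 1) (u + of_nat a + 1) (-1))"

definition zAbar :: "nat \<Rightarrow> nat \<Rightarrow> complex \<Rightarrow> lpoly" where
  "zAbar n a u = (if a = n then
       Yp n (n - 1) (u + of_nat n) 1 * Yp n n (u + (2 * of_nat n + 3) / 2) (-1)
         * Yp n n (u + (2 * of_nat n + 1) / 2) (-1)
     else Yp n (a - 1) (u + 2 * of_nat n - of_nat a) 1
         * Yp n a (u + 2 * of_nat n - of_nat a + 1) (-1))"

definition z0 :: "nat \<Rightarrow> complex \<Rightarrow> lpoly" where
  "z0 n u = Yp n n (u + (2 * of_nat n - 1) / 2) 1 * Yp n n (u + (2 * of_nat n + 3) / 2) (-1)"

text \<open>Formal power series sum_j c_j(u) D^j with D c(u) = c(u+1) D, represented by the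
  coefficient function (j, u) \<mapsto> c_j(u).\<close>
type_synonym 'q dser = "nat \<Rightarrow> complex \<Rightarrow> 'q"

definition dmul :: "'q::comm_ring_1 dser \<Rightarrow> 'q dser \<Rightarrow> 'q dser" where
  "dmul A B = (\<lambda>k u. \<Sum>i\<le>k. A i u * B (k - i) (u + of_nat i))"

definition dunit :: "'q::comm_ring_1 dser" where
  "dunit = (\<lambda>k u. if k = 0 then 1 else 0)"

definition dprod :: "'q::comm_ring_1 dser list \<Rightarrow> 'q dser" where
  "dprod xs = foldr dmul xs dunit"

definition dpow :: "'q::comm_ring_1 dser \<Rightarrow> nat \<Rightarrow> 'q dser" where
  "dpow X m = (dmul X ^^ m) dunit"

definition mono2 :: "(complex \<Rightarrow> 'q::comm_ring_1) \<Rightarrow> 'q dser" where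
  "mono2 c = (\<lambda>k u. if k = 2 then c u else 0)"

definition fac :: "(complex \<Rightarrow> 'q::comm_ring_1) \<Rightarrow> 'q dser" where
  "fac z = (\<lambda>k u. dunit k u - mono2 z k u)"

text \<open>(1 + z(u) D^2)^{-1} = sum_{k>=0} (- z(u) D^2)^k; the k-th term only contributes to
  degree 2k, so the coefficient of D^j is a finite sum over k \<le> j.\<close>
definition ginv :: "(complex \<Rightarrow> 'q::comm_ring_1) \<Rightarrow> 'q dser" where
  "ginv z = (\<lambda>j u. \<Sum>k\<le>j. dpow (mono2 (\<lambda>v. - z v)) k j u)"

definition Lser :: "nat \<Rightarrow> lpoly dser" where
  "Lser n = dmul (dprod (map (\<lambda>a. fac (zAbar n a)) [1..<n+1]))
              (dmul (ginv (z0 n)) (dprod (map (\<lambda>a. fac (zA n a)) (rev [1..<n+1]))))"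

end

theory Submission
  imports Defs
begin

(*
  Since S_a is a derivation on Y, we record logarithmic derivatives: x has logarithmic
  derivative g if S_a x = x g. These add under multiplication, and Y_b(p) has logarithmic
  derivative S_a(p) if b = a and 0 otherwise. Series all of whose coefficients are
  annihilated by S_a are closed under multiplication, so it suffices to cut L(u) into
  annihilated pieces. Every factor 1 - z D^2 with z free of Y_a is one.

  For a < n the remaining factors form the adjacent pairs (1 - z_{a+1} D^2)(1 - z_a D^2)
  and (1 - z_{bar a} D^2)(1 - z_{bar(a+1)} D^2). By z_a(u) = z_{a+1}(u) A_a(u+a+1) (and its
  barred analogue) together with S_a(u+2) = A_a(u+1) S_a(u), the two terms of the
  D^2-coefficient have cancelling images, while in the D^4-coefficient the Y_a's cancel.

  For a = n put W(v) = Y_n(v + n - 1/2). Then z_0(u) = W(u)/W(u+2), i.e.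
  (1 + z_0 D^2)^-1 = W (1 + D^2)^-1 W^-1, and the D^(2m)-coefficient (m >= 2) of the middle
  factor (1 - z_{bar n} D^2)(1 + z_0 D^2)^-1 (1 - z_n D^2) factorises as
  (-1)^m P(u) R(u+2m-2), with P(u) = W(u) + z_{bar n}(u) W(u+2) and
  R(v) = W(v+2)^-1 + z_n(v) W(v)^-1. By the formula for A_n, each of P and R is a sum of
  two terms with cancelling images. The D^2-coefficient is -P(u) R(u) plus a ratio of
  two Y_{n-1}'s.
*)

section \<open>Series in the shift operator\<close>

lemma dmul_assoc: "dmul (dmul A B) C = dmul A (dmul B C)"
proof (intro ext)
  fix k u
  define g where "g = (\<lambda>j l. A j u * B l (u + of_nat j) * C (k - (j + l)) (u + of_nat (j + l)))"
  have "dmul (dmul A B) C k u = (\<Sum>i\<le>k. \<Sum>j\<le>i. g j (i - j))"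
    unfolding dmul_def g_def sum_distrib_right
    by (intro sum.cong refl) (simp add: mult.assoc)
  also have "\<dots> = (\<Sum>(j,l)\<in>{(j,l). j + l \<le> k}. g j l)"
    by (rule sum.triangle_reindex_eq[symmetric])
  also have "{(j,l). j + l \<le> k} = Sigma {..k} (\<lambda>j. {..k - j})" by auto
  also have "(\<Sum>(j,l)\<in>Sigma {..k} (\<lambda>j. {..k - j}). g j l) = (\<Sum>j\<le>k. \<Sum>l\<le>k-j. g j l)"
    by (rule sum.Sigma[symmetric]) auto
  also have "\<dots> = dmul A (dmul B C) k u"
    unfolding dmul_def g_def sum_distrib_left
    by (intro sum.cong refl) (simp add: mult.assoc add.assoc)
  finally show "dmul (dmul A B) C k u = dmul A (dmul B C) k u" .
qed

lemma dmul_dunit_right [simp]: "dmul A dunit = A"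
proof (intro ext)
  fix k u
  have "dmul A dunit k u = (\<Sum>i\<le>k. if i = k then A i u else 0)"
    unfolding dmul_def dunit_def by (intro sum.cong refl) auto
  then show "dmul A dunit k u = A k u" by simp
qed

lemma dmul_dunit_left [simp]: "dmul dunit A = A"
proof (intro ext)
  fix k u
  have "dmul dunit A k u = (\<Sum>i\<le>k. if i = 0 then A k u else 0)"
    unfolding dmul_def dunit_def by (intro sum.cong refl) auto
  then show "dmul dunit A k u = A k u" by simp
qed

lemma dprod_Nil [simp]: "dprod [] = dunit"
  by (simp add: dprod_def)

lemma dprod_Cons [simp]: "dprod (X # Xs) = dmul X (dprod Xs)"
  by (simp add: dprod_def)

lemma dprod_append: "dprod (Xs @ Ys) = dmul (dprod Xs) (dprod Ys)"
  by (induction Xs) (simp_all add: dmul_assoc)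

lemma dmul_mono2_left: "dmul (mono2 c) B k u = (if 2 \<le> k then c u * B (k - 2) (u + 2) else 0)"
proof -
  have "dmul (mono2 c) B k u = (\<Sum>i\<le>k. if i = 2 then c u * B (k - 2) (u + 2) else 0)"
    unfolding dmul_def mono2_def by (intro sum.cong refl) auto
  then show ?thesis by simp
qed

lemma dmul_fac_left:
  "dmul (fac x) B k u = B k u - (if 2 \<le> k then x u * B (k - 2) (u + 2) else 0)"
proof -
  have "dmul (fac x) B k u = (\<Sum>i\<le>k. (if i = 0 then B k u else 0)
      - (if i = 2 then x u * B (k - 2) (u + 2) else 0))"
    unfolding dmul_def fac_def dunit_def mono2_def by (intro sum.cong refl) (auto simp: algebra_simps)
  then show ?thesis by (simp add: sum_subtractf)
qed

lemma dmul_fac_right: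
  "dmul A (fac z) k u = A k u - (if 2 \<le> k then A (k - 2) u * z (u + of_nat (k - 2)) else 0)"
proof -
  have "dmul A (fac z) k u = (\<Sum>i\<le>k. (if i = k then A k u else 0)
      - (if i = k - 2 \<and> 2 \<le> k then A (k - 2) u * z (u + of_nat (k - 2)) else 0))"
    unfolding dmul_def fac_def dunit_def mono2_def by (intro sum.cong refl) (auto simp: algebra_simps)
  then show ?thesis by (simp add: sum_subtractf)
qed

lemma dmul_fac_fac: "dmul (fac x) (fac y) k u =
   (if k = 0 then 1 else if k = 2 then - x u - y u else if k = 4 then x u * y (u + 2) else 0)"
  unfolding dmul_fac_left by (auto simp: fac_def dunit_def mono2_def)

definition shifted_prod :: "(complex \<Rightarrow> 'q::comm_ring_1) \<Rightarrow> nat \<Rightarrow> complex \<Rightarrow> 'q" where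
  "shifted_prod c k u = (\<Prod>i<k. c (u + 2 * of_nat i))"

lemma shifted_prod_Suc: "shifted_prod c (Suc k) u = c u * shifted_prod c k (u + 2)"
  unfolding shifted_prod_def prod.lessThan_Suc_shift by (simp add: algebra_simps)

lemma dpow_mono2: "dpow (mono2 c) k j u = (if j = 2 * k then shifted_prod c k u else 0)"
proof (induction k arbitrary: j u)
  case 0
  then show ?case by (simp add: dpow_def dunit_def shifted_prod_def)
next
  case (Suc k)
  have "dpow (mono2 c) (Suc k) j u = dmul (mono2 c) (dpow (mono2 c) k) j u"
    by (simp add: dpow_def)
  then show ?case
    by (auto simp: dmul_mono2_left Suc shifted_prod_Suc)
qed

lemma ginv_coeff:
  "ginv z j u = (if even j then (-1) ^ (j div 2) * shifted_prod z (j div 2) u else 0)"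
proof -
  have "ginv z j u = (\<Sum>k\<le>j. if k = j div 2 \<and> even j then shifted_prod (\<lambda>v. - z v) k u else 0)"
    unfolding ginv_def dpow_mono2 by (intro sum.cong refl) auto
  then show ?thesis
    by (auto simp: shifted_prod_def prod_uminus)
qed

section \<open>Laurent monomials\<close>

lemma lm_add: "lm (e + f) = lm e * lm f"
  by (simp add: lm_def mult_single)

lemma lm_zero: "lm 0 = 1"
  by (simp add: lm_def)

definition Qexp :: "nat \<Rightarrow> complex \<Rightarrow> lmon" where
  "Qexp b x = Poly_Mapping.single (b, x) 1"

definition Yexp :: "nat \<Rightarrow> nat \<Rightarrow> complex \<Rightarrow> lmon" where
  "Yexp n b p = (if b = 0 then 0 else Qexp b (p - dd n b / 2) - Qexp b (p + dd n b / 2))"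

lemma single_minus_one: "Poly_Mapping.single k (- 1 :: int) = - Poly_Mapping.single k 1"
  using single_uminus[of k "1::int"] by simp

lemma Qp_lm: "Qp b x 1 = lm (Qexp b x)" "Qp b x (-1) = lm (- Qexp b x)"
  unfolding Qp_def Qexp_def by (simp_all add: single_minus_one)

lemma Yp_lm: "Yp n b p 1 = lm (Yexp n b p)" "Yp n b p (-1) = lm (- Yexp n b p)"
  unfolding Yp_def Yexp_def Qexp_def by (simp_all add: single_minus_one lm_zero)

lemmas monomial_simps = Qp_lm Yp_lm lm_add[symmetric]

lemma Yp_zero_index [simp]: "Yp n 0 p k = 1"
  by (simp add: Yp_def)

lemma Qp_inv: "Qp b x 1 * Qp b x (-1) = 1"
  by (simp only: monomial_simps) (simp add: lm_zero)

lemma Yp_inv: "Yp n b p 1 * Yp n b p (-1) = 1"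
  by (simp only: monomial_simps) (simp add: lm_zero)

section \<open>\<open>A\<^sub>a\<close> in terms of the \<open>Y\<^sub>b\<close>\<close>

lemma Aa_neighbours:
  assumes "1 \<le> a" "a \<le> n"
  shows "Aa n a v = (\<Prod>b\<in>{1..n} \<inter> {a - 1, a, a + 1}.
     Qp b (v - of_int (Bform n a b)) 1 * Qp b (v + of_int (Bform n a b)) (-1))"
  unfolding Aa_def
  by (rule prod.mono_neutral_right) (auto simp: Bform_def Qp_inv)

lemma Aa_last:
  assumes "2 \<le> n"
  shows "Aa n n v = Yp n n (v - 1/2) 1 * Yp n n (v + 1/2) 1 * Yp n (n - 1) v (-1)"
proof -
  have ne: "n - 1 \<noteq> n" "n - 1 + 1 = n" "n - 1 \<noteq> 0" using assms by auto
  have "{1..n} \<inter> {n - 1, n, n + 1} = {n - 1, n}" using assms by auto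
  then have "Aa n n v = Qp (n-1) (v + 1) 1 * Qp (n-1) (v - 1) (-1) * (Qp n (v - 1) 1 * Qp n (v + 1) (-1))"
    using Aa_neighbours[of n n v] assms ne by (simp add: Bform_def)
  then show ?thesis
    using ne by (simp only: monomial_simps) (auto simp: Yexp_def dd_def algebra_simps)
qed

lemma Aa_inner:
  assumes "1 \<le> a" "a + 1 < n"
  shows "Aa n a v = Yp n a (v - 1) 1 * Yp n a (v + 1) 1 * Yp n (a - 1) v (-1) * Yp n (a + 1) v (-1)"
proof (cases "a = 1")
  case True
  have "{1..n} \<inter> {a - 1, a, a + 1} = {a, a + 1}" using assms True by auto
  then have "Aa n a v = Qp a (v - 2) 1 * Qp a (v + 2) (-1) * (Qp (a+1) (v + 1) 1 * Qp (a+1) (v - 1) (-1))"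
    using Aa_neighbours[of a n v] assms True by (simp add: Bform_def)
  then show ?thesis
    using assms True by (simp only: monomial_simps) (auto simp: Yexp_def dd_def algebra_simps)
next
  case False
  have ne: "a - 1 \<noteq> a" "a - 1 \<noteq> a + 1" "a - 1 + 1 = a" "a - 1 \<noteq> n" "a \<noteq> n" "a + 1 \<noteq> n" "a - 1 \<noteq> 0"
    using assms False by auto
  have "{1..n} \<inter> {a - 1, a, a + 1} = {a - 1, a, a + 1}" using assms False by auto
  then have "Aa n a v = Qp (a-1) (v + 1) 1 * Qp (a-1) (v - 1) (-1) * (Qp a (v - 2) 1 * Qp a (v + 2) (-1)
      * (Qp (a+1) (v + 1) 1 * Qp (a+1) (v - 1) (-1)))"
    using Aa_neighbours[of a n v] assms ne by (simp add: Bform_def)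
  then show ?thesis
    using assms ne by (simp only: monomial_simps) (auto simp: Yexp_def dd_def algebra_simps)
qed

lemma Aa_penultimate:
  assumes "2 \<le> n"
  shows "Aa n (n - 1) v = Yp n (n - 1) (v - 1) 1 * Yp n (n - 1) (v + 1) 1 * Yp n (n - 2) v (-1)
      * Yp n n (v - 1/2) (-1) * Yp n n (v + 1/2) (-1)"
proof (cases "n = 2")
  case True
  have "{1..n} \<inter> {n - 1 - 1, n - 1, n - 1 + 1} = {1, 2}" using True by auto
  then have "Aa n (n - 1) v = Qp 1 (v - 2) 1 * Qp 1 (v + 2) (-1) * (Qp 2 (v + 1) 1 * Qp 2 (v - 1) (-1))"
    using Aa_neighbours[of "n - 1" n v] True by (simp add: Bform_def)
  then show ?thesis
    using True by (simp only: monomial_simps) (auto simp: Yexp_def dd_def algebra_simps)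
next
  case False
  have ne: "n - 2 \<noteq> n - 1" "n - 2 \<noteq> n" "n - 1 \<noteq> n" "n - 2 + 1 = n - 1" "n - 1 + 1 = n"
    "n - 2 \<noteq> 0" "n - 1 - 1 = n - 2"
    using assms False by auto
  have "{1..n} \<inter> {n - 1 - 1, n - 1, n - 1 + 1} = {n - 2, n - 1, n}" using assms False by auto
  then have "Aa n (n - 1) v = Qp (n-2) (v + 1) 1 * Qp (n-2) (v - 1) (-1) * (Qp (n-1) (v - 2) 1
      * Qp (n-1) (v + 2) (-1) * (Qp n (v + 1) 1 * Qp n (v - 1) (-1)))"
    using Aa_neighbours[of "n - 1" n v] assms ne by (simp add: Bform_def)
  then show ?thesis
    using ne by (simp only: monomial_simps) (auto simp: Yexp_def dd_def algebra_simps)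
qed

lemma zA_eq_zA_Suc_mult_Aa:
  assumes "1 \<le> a" "a < n"
  shows "zA n a u = zA n (a + 1) u * Aa n a (u + of_nat a + 1)"
proof (cases "a + 1 < n")
  case True
  then have "a \<noteq> n" "a + 1 \<noteq> n" by auto
  then show ?thesis
    unfolding zA_def Aa_inner[OF assms(1) True]
    by (simp only: if_False monomial_simps) (rule arg_cong[where f = lm], simp add: algebra_simps)
next
  case False
  then have n: "n = a + 1" using assms by simp
  have "zA n (a + 1) u = Yp n n (u + of_nat a + 1 + 1/2) 1 * Yp n n (u + of_nat a + 1 - 1/2) 1
      * Yp n a (u + of_nat a + 1 + 1) (-1)"
    unfolding zA_def n by (simp add: field_simps)
  moreover have "Aa n a v = Yp n a (v - 1) 1 * Yp n a (v + 1) 1 * Yp n (a - 1) v (-1)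
      * Yp n n (v - 1/2) (-1) * Yp n n (v + 1/2) (-1)" for v
    using Aa_penultimate[of n v] assms by (simp add: n)
  moreover have "zA n a u = Yp n a (u + of_nat a) 1 * Yp n (a - 1) (u + of_nat a + 1) (-1)"
    using assms by (simp add: zA_def)
  ultimately show ?thesis
    by (simp only: monomial_simps) (simp add: algebra_simps)
qed

lemma zAbar_Suc_eq_zAbar_mult_Aa:
  assumes "1 \<le> a" "a < n"
  shows "zAbar n (a + 1) u = zAbar n a u * Aa n a (u + 2 * of_nat n - of_nat a)"
proof (cases "a + 1 < n")
  case True
  then have "a \<noteq> n" "a + 1 \<noteq> n" by auto
  then show ?thesis
    unfolding zAbar_def Aa_inner[OF assms(1) True]
    by (simp only: if_False monomial_simps) (rule arg_cong[where f = lm], simp add: algebra_simps)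
next
  case False
  then have n: "n = a + 1" using assms by simp
  have "zAbar n (a + 1) u = Yp n a (u + of_nat a + 2 - 1) 1 * Yp n n (u + of_nat a + 2 + 1/2) (-1)
      * Yp n n (u + of_nat a + 2 - 1/2) (-1)"
    unfolding zAbar_def n by (simp add: field_simps)
  moreover have "Aa n a v = Yp n a (v - 1) 1 * Yp n a (v + 1) 1 * Yp n (a - 1) v (-1)
      * Yp n n (v - 1/2) (-1) * Yp n n (v + 1/2) (-1)" for v
    using Aa_penultimate[of n v] assms by (simp add: n)
  moreover have "zAbar n a u = Yp n (a - 1) (u + of_nat a + 2) 1 * Yp n a (u + of_nat a + 2 + 1) (-1)"
    using assms by (simp add: zAbar_def n algebra_simps)
  ultimately show ?thesis
    by (simp only: monomial_simps) (simp add: n algebra_simps)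
qed

section \<open>The middle factor for \<open>a = n\<close>\<close>

definition W :: "nat \<Rightarrow> complex \<Rightarrow> int \<Rightarrow> lpoly" where
  "W n v k = Yp n n (v + of_nat n - 1/2) k"

lemma W_inv: "W n v 1 * W n v (-1) = 1"
  unfolding W_def by (rule Yp_inv)

lemma z0_eq_W: "z0 n u = W n u 1 * W n (u + 2) (-1)"
proof -
  have "u + (2 * of_nat n + 3) / 2 = u + 2 + of_nat n - 1/2" "u + (2 * of_nat n - 1) / 2 = u + of_nat n - 1/2"
    by (simp_all add: field_simps)
  then show ?thesis unfolding z0_def W_def by (simp only:)
qed

lemma zA_last_eq_W: "zA n n u = W n (u + 1) 1 * W n u 1 * Yp n (n - 1) (u + of_nat n + 1) (-1)"
proof -
  have "u + (2 * of_nat n + 1) / 2 = u + 1 + of_nat n - 1/2" "u + (2 * of_nat n - 1) / 2 = u + of_nat n - 1/2"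
    by (simp_all add: field_simps)
  then show ?thesis unfolding zA_def W_def by (simp only: simp_thms(6) if_True)
qed

lemma zAbar_last_eq_W: "zAbar n n u = Yp n (n - 1) (u + of_nat n) 1 * W n (u + 2) (-1) * W n (u + 1) (-1)"
proof -
  have "u + (2 * of_nat n + 1) / 2 = u + 1 + of_nat n - 1/2" "u + (2 * of_nat n + 3) / 2 = u + 2 + of_nat n - 1/2"
    by (simp_all add: field_simps)
  then show ?thesis unfolding zAbar_def W_def by (simp only: simp_thms(6) if_True)
qed

lemma Aa_last_eq_W:
  assumes "2 \<le> n"
  shows "Aa n n (v + of_nat n) = W n v 1 * W n (v + 1) 1 * Yp n (n - 1) (v + of_nat n) (-1)"
  unfolding Aa_last[OF assms] W_def by (simp add: algebra_simps)

lemma shifted_prod_z0: "shifted_prod (z0 n) k v = W n v 1 * W n (v + 2 * of_nat k) (-1)"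
proof (induction k arbitrary: v)
  case 0
  then show ?case by (simp add: shifted_prod_def W_inv)
next
  case (Suc k)
  have "shifted_prod (z0 n) (Suc k) v = W n v 1 * (W n (v + 2) (-1) * W n (v + 2) 1) * W n (v + 2 + 2 * of_nat k) (-1)"
    unfolding shifted_prod_Suc Suc z0_eq_W by (simp add: ac_simps)
  then show ?case
    by (simp add: W_inv mult.commute[of "W n (v + 2) (-1)"] algebra_simps)
qed

definition Lmid :: "nat \<Rightarrow> lpoly dser" where
  "Lmid n = dmul (dmul (fac (zAbar n n)) (ginv (z0 n))) (fac (zA n n))"

definition mid_left :: "nat \<Rightarrow> complex \<Rightarrow> lpoly" where
  "mid_left n u = W n u 1 + zAbar n n u * W n (u + 2) 1"

definition mid_right :: "nat \<Rightarrow> complex \<Rightarrow> lpoly" where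
  "mid_right n v = W n (v + 2) (-1) + zA n n v * W n v (-1)"

definition mid_correction :: "nat \<Rightarrow> complex \<Rightarrow> lpoly" where
  "mid_correction n u = Yp n (n - 1) (u + of_nat n) 1 * Yp n (n - 1) (u + of_nat n + 1) (-1)"

lemma mid_left_monomials:
  assumes "2 \<le> n"
  shows "zAbar n n u * W n (u + 2) 1 * Aa n n (u + of_nat n) = W n u 1"
  unfolding zAbar_last_eq_W Aa_last_eq_W[OF assms] W_def
  by (simp only: monomial_simps) (rule arg_cong[where f = lm], simp add: algebra_simps)

lemma mid_right_monomials:
  assumes "2 \<le> n"
  shows "W n (v + 2) (-1) * Aa n n ((v + 1) + of_nat n) = zA n n v * W n v (-1)"
  unfolding zA_last_eq_W Aa_last_eq_W[OF assms] W_def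
  by (simp only: monomial_simps) (rule arg_cong[where f = lm], simp add: algebra_simps)

lemma mid_left_mult_mid_right:
  "mid_left n u * mid_right n u = z0 n u + zAbar n n u + zA n n u + mid_correction n u"
proof -
  have "zAbar n n u * W n (u + 2) 1 * (zA n n u * W n u (-1)) = mid_correction n u"
    unfolding zA_last_eq_W zAbar_last_eq_W mid_correction_def W_def
    by (simp only: monomial_simps) (rule arg_cong[where f = lm], simp add: algebra_simps)
  then show ?thesis
    unfolding mid_left_def mid_right_def z0_eq_W
    by (simp add: algebra_simps W_inv mult.commute[of "W n (u + 2) 1"] mult.left_commute[of "W n u 1"])
qed

lemma Lmid_coeff:
  "Lmid n k u = ginv (z0 n) k u - (if 2 \<le> k then zAbar n n u * ginv (z0 n) (k - 2) (u + 2) else 0)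
     - (if 2 \<le> k then (ginv (z0 n) (k - 2) u
          - (if 2 \<le> k - 2 then zAbar n n u * ginv (z0 n) (k - 2 - 2) (u + 2) else 0))
          * zA n n (u + of_nat (k - 2))
        else 0)"
  unfolding Lmid_def dmul_fac_right dmul_fac_left ..

lemma Lmid_coeff_odd: "odd k \<Longrightarrow> Lmid n k u = 0"
  unfolding Lmid_coeff ginv_coeff by auto

lemma Lmid_coeff_0: "Lmid n 0 u = 1"
  unfolding Lmid_coeff ginv_coeff by (simp add: shifted_prod_def)

lemma Lmid_coeff_2: "Lmid n 2 u = mid_correction n u - mid_left n u * mid_right n u"
  unfolding Lmid_coeff ginv_coeff mid_left_mult_mid_right by (simp add: shifted_prod_def)

lemma Lmid_coeff_ge4:
  "Lmid n (2 * m + 4) u = (-1) ^ m * (mid_left n u * mid_right n (u + 2 * of_nat m + 2))"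
proof -
  have "(2 * m + 4) div 2 = m + 2" "(2 * m + 2) div 2 = m + 1" "(2 * m) div 2 = m" by auto
  then show ?thesis
    unfolding Lmid_coeff ginv_coeff shifted_prod_z0 mid_left_def mid_right_def
    by (simp add: algebra_simps)
qed

section \<open>Logarithmic derivatives under the screening operator\<close>

locale screening =
  fixes n a :: nat
    and phi :: "lpoly \<Rightarrow> 'r::comm_ring_1"
    and S :: "nat \<Rightarrow> complex \<Rightarrow> 'r"
    and Sa :: "lpoly \<Rightarrow> 'r"
  assumes n2: "n \<ge> 2"
    and a_range: "1 \<le> a" "a \<le> n"
    and phi_one: "phi 1 = 1"
    and phi_add: "\<And>x y. phi (x + y) = phi x + phi y"
    and phi_mult: "\<And>x y. phi (x * y) = phi x * phi y"
    and S_rel: "\<And>b u. 1 \<le> b \<Longrightarrow> b \<le> n \<Longrightarrow>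
                  S b (u + dd n b) = phi (Aa n b (u + dd n b / 2)) * S b u"
    and Sa_add: "\<And>x y. x \<in> Yring n \<Longrightarrow> y \<in> Yring n \<Longrightarrow> Sa (x + y) = Sa x + Sa y"
    and Sa_leibniz: "\<And>x y. x \<in> Yring n \<Longrightarrow> y \<in> Yring n \<Longrightarrow>
                  Sa (x * y) = Sa x * phi y + phi x * Sa y"
    and Sa_gen: "\<And>b u. 1 \<le> b \<Longrightarrow> b \<le> n \<Longrightarrow>
                  Sa (Yp n b u 1) = (if b = a then phi (Yp n b u 1) * S b u else 0)"
begin

lemma phi_zero: "phi 0 = 0"
  using phi_add[of 0 0] by simp

lemma phi_neg: "phi (- x) = - phi x"
  using phi_add[of x "- x"] by (simp add: phi_zero add_eq_0_iff)

lemma Y_zero: "0 \<in> Yring n"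
  using Yring.add[OF Yring.one Yring.neg[OF Yring.one]] by simp

lemma Sa_zero: "Sa 0 = 0"
  using Sa_add[OF Y_zero Y_zero] by simp

lemma Sa_one: "Sa 1 = 0"
  using Sa_leibniz[OF Yring.one Yring.one] phi_one by simp

lemma Sa_neg: "x \<in> Yring n \<Longrightarrow> Sa (- x) = - Sa x"
  using Sa_add[OF _ Yring.neg, of x x] by (simp add: Sa_zero add_eq_0_iff)

definition has_logderiv :: "lpoly \<Rightarrow> 'r \<Rightarrow> bool" where
  "has_logderiv x g \<longleftrightarrow> x \<in> Yring n \<and> Sa x = phi x * g"

definition Y_logderiv :: "nat \<Rightarrow> complex \<Rightarrow> 'r" where
  "Y_logderiv b p = (if b = a then S a p else 0)"

lemma has_logderiv_zero: "has_logderiv 0 0"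
  by (simp add: has_logderiv_def Y_zero Sa_zero)

lemma has_logderiv_one: "has_logderiv 1 0"
  by (simp add: has_logderiv_def Yring.one Sa_one)

lemma has_logderiv_mult: "has_logderiv x g \<Longrightarrow> has_logderiv y h \<Longrightarrow> has_logderiv (x * y) (g + h)"
  unfolding has_logderiv_def by (auto simp: Sa_leibniz phi_mult algebra_simps intro: Yring.mult)

lemma has_logderiv_neg: "has_logderiv x g \<Longrightarrow> has_logderiv (- x) g"
  unfolding has_logderiv_def by (auto simp: Sa_neg phi_neg intro: Yring.neg)

lemma has_logderiv_sign: "has_logderiv x g \<Longrightarrow> has_logderiv ((-1) ^ k * x) g"
  by (cases "even k") (auto intro: has_logderiv_neg)

lemma has_logderiv_inverse:
  assumes x: "has_logderiv x g" and y: "y \<in> Yring n" and inv: "x * y = 1"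
  shows "has_logderiv y (- g)"
proof -
  have unit: "phi x * phi y = 1"
    using inv phi_one by (simp flip: phi_mult)
  have "0 = Sa (x * y)" using inv Sa_one by simp
  also have "\<dots> = phi x * g * phi y + phi x * Sa y"
    using x y Sa_leibniz by (simp add: has_logderiv_def)
  finally have "phi y * (phi x * g * phi y + phi x * Sa y) = 0" by simp
  then have "Sa y + phi y * g = 0"
    by (simp add: algebra_simps) (metis unit mult.assoc mult.commute mult_1)
  then show ?thesis
    using y by (simp add: has_logderiv_def eq_neg_iff_add_eq_0)
qed

lemma has_logderiv_add_cancel:
  assumes "has_logderiv x g" "has_logderiv y h" "phi x * g + phi y * h = 0"
  shows "has_logderiv (x + y) 0"
  using assms by (auto simp: has_logderiv_def Sa_add intro: Yring.add)

lemma has_logderiv_sum: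
  "(\<And>i. i \<in> I \<Longrightarrow> has_logderiv (f i) 0) \<Longrightarrow> has_logderiv (sum f I) 0"
proof (induction I rule: infinite_finite_induct)
  case (insert i I)
  then show ?case
    using has_logderiv_add_cancel[of "f i" 0 "sum f I" 0] by simp
qed (simp_all add: has_logderiv_zero)

lemma has_logderiv_prod:
  "(\<And>i. i < (k::nat) \<Longrightarrow> has_logderiv (f i) (g i)) \<Longrightarrow> has_logderiv (\<Prod>i<k. f i) (\<Sum>i<k. g i)"
  by (induction k) (auto simp: has_logderiv_one intro: has_logderiv_mult)

lemma has_logderiv_Yp: "b \<le> n \<Longrightarrow> has_logderiv (Yp n b p 1) (Y_logderiv b p)"
  using Sa_gen[of b p] Yring.gen[of b n p] a_range
  by (cases "b = 0") (auto simp: has_logderiv_def Y_logderiv_def Yp_def Yring.one Sa_one)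

lemma has_logderiv_Yp_inv:
  assumes "b \<le> n"
  shows "has_logderiv (Yp n b p (-1)) (- Y_logderiv b p)"
proof (rule has_logderiv_inverse[OF has_logderiv_Yp[OF assms] _ Yp_inv])
  show "Yp n b p (-1) \<in> Yring n"
    using assms by (cases "b = 0") (simp_all add: Yring.one Yring.geninv)
qed

definition annihilated :: "lpoly dser \<Rightarrow> bool" where
  "annihilated A \<longleftrightarrow> (\<forall>k u. has_logderiv (A k u) 0)"

lemma annihilated_dunit: "annihilated dunit"
  by (simp add: annihilated_def dunit_def has_logderiv_one has_logderiv_zero)

lemma annihilated_dmul: "annihilated A \<Longrightarrow> annihilated B \<Longrightarrow> annihilated (dmul A B)"
  unfolding annihilated_def dmul_def
  using has_logderiv_mult[of _ 0 _ 0] by (auto intro!: has_logderiv_sum)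

lemma annihilated_dprod: "(\<And>X. X \<in> set Xs \<Longrightarrow> annihilated X) \<Longrightarrow> annihilated (dprod Xs)"
  by (induction Xs) (auto simp: annihilated_dunit intro: annihilated_dmul)

lemma annihilated_fac: "(\<And>u. has_logderiv (z u) 0) \<Longrightarrow> annihilated (fac z)"
  unfolding annihilated_def fac_def dunit_def mono2_def
  by (auto intro: has_logderiv_one has_logderiv_zero has_logderiv_neg)

lemma annihilated_ginv: "(\<And>u. has_logderiv (z u) 0) \<Longrightarrow> annihilated (ginv z)"
  unfolding annihilated_def ginv_coeff shifted_prod_def
  using has_logderiv_prod[of _ "\<lambda>i. z (_ + 2 * of_nat i)" "\<lambda>_. 0"]
  by (auto intro!: has_logderiv_sign simp: has_logderiv_zero)

lemma annihilated_fac_pair: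
  assumes x: "\<And>u. has_logderiv (x u) (- s (u + 2))"
    and y: "\<And>u. has_logderiv (y u) (s u)"
    and xy: "\<And>u. phi (y u) * s u = phi (x u) * s (u + 2)"
  shows "annihilated (dmul (fac x) (fac y))"
proof -
  have "has_logderiv (- x u + - y u) 0" for u
    by (rule has_logderiv_add_cancel[OF has_logderiv_neg[OF x] has_logderiv_neg[OF y]])
       (simp add: phi_neg xy)
  moreover have "has_logderiv (x u * y (u + 2)) 0" for u
    using has_logderiv_mult[OF x y, of u "u + 2"] by simp
  ultimately show ?thesis
    unfolding annihilated_def dmul_fac_fac
    by (auto simp: has_logderiv_one has_logderiv_zero)
qed

lemma has_logderiv_zA:
  assumes "1 \<le> b" "b < n"
  shows "has_logderiv (zA n b u) (Y_logderiv b (u + of_nat b) - Y_logderiv (b - 1) (u + of_nat b + 1))"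
  using has_logderiv_mult[OF has_logderiv_Yp has_logderiv_Yp_inv] assms
  by (simp add: zA_def)

lemma has_logderiv_zA_last:
  "has_logderiv (zA n n u) (Y_logderiv n (u + (2 * of_nat n + 1) / 2)
     + Y_logderiv n (u + (2 * of_nat n - 1) / 2) - Y_logderiv (n - 1) (u + of_nat n + 1))"
  using has_logderiv_mult[OF has_logderiv_mult[OF has_logderiv_Yp has_logderiv_Yp] has_logderiv_Yp_inv]
  by (simp add: zA_def)

lemma has_logderiv_zAbar:
  assumes "1 \<le> b" "b < n"
  shows "has_logderiv (zAbar n b u) (Y_logderiv (b - 1) (u + 2 * of_nat n - of_nat b)
     - Y_logderiv b (u + 2 * of_nat n - of_nat b + 1))"
  using has_logderiv_mult[OF has_logderiv_Yp has_logderiv_Yp_inv] assms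
  by (simp add: zAbar_def)

lemma has_logderiv_zAbar_last:
  "has_logderiv (zAbar n n u) (Y_logderiv (n - 1) (u + of_nat n)
     - Y_logderiv n (u + (2 * of_nat n + 3) / 2) - Y_logderiv n (u + (2 * of_nat n + 1) / 2))"
  using has_logderiv_mult[OF has_logderiv_mult[OF has_logderiv_Yp has_logderiv_Yp_inv] has_logderiv_Yp_inv]
  by (simp add: zAbar_def)

lemma has_logderiv_z0:
  "has_logderiv (z0 n u) (Y_logderiv n (u + (2 * of_nat n - 1) / 2) - Y_logderiv n (u + (2 * of_nat n + 3) / 2))"
  using has_logderiv_mult[OF has_logderiv_Yp has_logderiv_Yp_inv] by (simp add: z0_def)

lemma annihilated_fac_zA_far:
  assumes "1 \<le> b" "b \<le> n" "b \<noteq> a" "b \<noteq> a + 1"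
  shows "annihilated (fac (zA n b))"
proof (rule annihilated_fac)
  fix u
  have "b - 1 \<noteq> a" using assms by auto
  show "has_logderiv (zA n b u) 0"
  proof (cases "b = n")
    case True
    then show ?thesis using has_logderiv_zA_last[of u] assms \<open>b - 1 \<noteq> a\<close> by (simp add: Y_logderiv_def)
  next
    case False
    then show ?thesis using has_logderiv_zA[of b u] assms \<open>b - 1 \<noteq> a\<close> by (simp add: Y_logderiv_def)
  qed
qed

lemma annihilated_fac_zAbar_far:
  assumes "1 \<le> b" "b \<le> n" "b \<noteq> a" "b \<noteq> a + 1"
  shows "annihilated (fac (zAbar n b))"
proof (rule annihilated_fac)
  fix u
  have "b - 1 \<noteq> a" using assms by auto
  show "has_logderiv (zAbar n b u) 0"
  proof (cases "b = n")
    case True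
    then show ?thesis using has_logderiv_zAbar_last[of u] assms \<open>b - 1 \<noteq> a\<close> by (simp add: Y_logderiv_def)
  next
    case False
    then show ?thesis using has_logderiv_zAbar[of b u] assms \<open>b - 1 \<noteq> a\<close> by (simp add: Y_logderiv_def)
  qed
qed

lemma annihilated_ginv_z0: "a \<noteq> n \<Longrightarrow> annihilated (ginv (z0 n))"
  by (rule annihilated_ginv) (use has_logderiv_z0 in \<open>simp add: Y_logderiv_def\<close>)

lemma annihilated_fac_zA_pair:
  assumes "a < n"
  shows "annihilated (dmul (fac (zA n (a + 1))) (fac (zA n a)))"
proof (rule annihilated_fac_pair)
  fix u
  have "a - 1 \<noteq> a" using a_range by simp
  show "has_logderiv (zA n (a + 1) u) (- S a ((u + 2) + of_nat a))"
  proof (cases "a + 1 < n")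
    case True
    then show ?thesis
      using has_logderiv_zA[of "a + 1" u] by (simp add: Y_logderiv_def algebra_simps)
  next
    case False
    then have "a + 1 = n" using assms by simp
    then show ?thesis
      using has_logderiv_zA_last[of u] by (auto simp: Y_logderiv_def algebra_simps)
  qed
  show "has_logderiv (zA n a u) (S a (u + of_nat a))"
    using has_logderiv_zA[of a u] a_range assms \<open>a - 1 \<noteq> a\<close> by (simp add: Y_logderiv_def)
  have "S a (u + of_nat a + 2) = phi (Aa n a (u + of_nat a + 1)) * S a (u + of_nat a)"
    using S_rel[of a "u + of_nat a"] a_range assms by (simp add: dd_def)
  then show "phi (zA n a u) * S a (u + of_nat a) = phi (zA n (a + 1) u) * S a ((u + 2) + of_nat a)"
    using zA_eq_zA_Suc_mult_Aa[of a n u] a_range assms by (simp add: phi_mult algebra_simps)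
qed

lemma annihilated_fac_zAbar_pair:
  assumes "a < n"
  shows "annihilated (dmul (fac (zAbar n a)) (fac (zAbar n (a + 1))))"
proof (rule annihilated_fac_pair)
  fix u
  have "a - 1 \<noteq> a" using a_range by simp
  show "has_logderiv (zAbar n a u) (- S a ((u + 2) + 2 * of_nat n - of_nat a - 1))"
    using has_logderiv_zAbar[of a u] a_range assms \<open>a - 1 \<noteq> a\<close> by (simp add: Y_logderiv_def algebra_simps)
  show "has_logderiv (zAbar n (a + 1) u) (S a (u + 2 * of_nat n - of_nat a - 1))"
  proof (cases "a + 1 < n")
    case True
    then show ?thesis
      using has_logderiv_zAbar[of "a + 1" u] by (simp add: Y_logderiv_def algebra_simps)
  next
    case False
    then have "a + 1 = n" using assms by simp
    then show ?thesis
      using has_logderiv_zAbar_last[of u] by (auto simp: Y_logderiv_def algebra_simps)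
  qed
  have "S a (u + 2 * of_nat n - of_nat a + 1)
      = phi (Aa n a (u + 2 * of_nat n - of_nat a)) * S a (u + 2 * of_nat n - of_nat a - 1)"
    using S_rel[of a "u + 2 * of_nat n - of_nat a - 1"] a_range assms by (simp add: dd_def algebra_simps)
  then show "phi (zAbar n (a + 1) u) * S a (u + 2 * of_nat n - of_nat a - 1)
      = phi (zAbar n a u) * S a ((u + 2) + 2 * of_nat n - of_nat a - 1)"
    using zAbar_Suc_eq_zAbar_mult_Aa[of a n u] a_range assms by (simp add: phi_mult algebra_simps)
qed

definition S_W :: "complex \<Rightarrow> 'r" where
  "S_W v = S n (v + of_nat n - 1/2)"

lemma S_W_shift: "S_W (v + 1) = phi (Aa n n (v + of_nat n)) * S_W v"
  using S_rel[of n "v + of_nat n - 1/2"] n2 by (simp add: S_W_def dd_def algebra_simps)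

lemma has_logderiv_W:
  assumes "a = n"
  shows "has_logderiv (W n v 1) (S_W v)" "has_logderiv (W n v (-1)) (- S_W v)"
proof -
  have "Y_logderiv n (v + of_nat n - 1/2) = S_W v"
    unfolding Y_logderiv_def S_W_def using assms by simp
  then show "has_logderiv (W n v 1) (S_W v)" "has_logderiv (W n v (-1)) (- S_W v)"
    using has_logderiv_Yp[of n "v + of_nat n - 1/2"] has_logderiv_Yp_inv[of n "v + of_nat n - 1/2"]
    by (simp_all add: W_def)
qed

lemma has_logderiv_Yp_penultimate:
  assumes "a = n"
  shows "has_logderiv (Yp n (n - 1) p 1) 0" "has_logderiv (Yp n (n - 1) p (-1)) 0"
proof -
  have "Y_logderiv (n - 1) p = 0"
    unfolding Y_logderiv_def using assms n2 by auto
  then show "has_logderiv (Yp n (n - 1) p 1) 0" "has_logderiv (Yp n (n - 1) p (-1)) 0"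
    using has_logderiv_Yp[of "n - 1" p] has_logderiv_Yp_inv[of "n - 1" p] by simp_all
qed

lemma has_logderiv_mid_left:
  assumes "a = n"
  shows "has_logderiv (mid_left n u) 0"
  unfolding mid_left_def
proof (rule has_logderiv_add_cancel)
  note W = has_logderiv_W[OF assms] and Y = has_logderiv_Yp_penultimate[OF assms]
  show "has_logderiv (W n u 1) (S_W u)" by (rule W)
  have "has_logderiv (zAbar n n u * W n (u + 2) 1) (0 + - S_W (u + 2) + - S_W (u + 1) + S_W (u + 2))"
    unfolding zAbar_last_eq_W by (intro has_logderiv_mult Y W)
  then show "has_logderiv (zAbar n n u * W n (u + 2) 1) (- S_W (u + 1))" by simp
  show "phi (W n u 1) * S_W u + phi (zAbar n n u * W n (u + 2) 1) * - S_W (u + 1) = 0"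
    unfolding S_W_shift mid_left_monomials[OF n2, of u, symmetric] phi_mult by (simp add: algebra_simps)
qed

lemma has_logderiv_mid_right:
  assumes "a = n"
  shows "has_logderiv (mid_right n v) 0"
  unfolding mid_right_def
proof (rule has_logderiv_add_cancel)
  note W = has_logderiv_W[OF assms] and Y = has_logderiv_Yp_penultimate[OF assms]
  show "has_logderiv (W n (v + 2) (-1)) (- S_W ((v + 1) + 1))"
    using W(2)[of "v + 2"] by (simp add: add.assoc)
  have "has_logderiv (zA n n v * W n v (-1)) (S_W (v + 1) + S_W v + 0 + - S_W v)"
    unfolding zA_last_eq_W by (intro has_logderiv_mult Y W)
  then show "has_logderiv (zA n n v * W n v (-1)) (S_W (v + 1))" by simp
  show "phi (W n (v + 2) (-1)) * - S_W ((v + 1) + 1) + phi (zA n n v * W n v (-1)) * S_W (v + 1) = 0"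
    unfolding S_W_shift[of "v + 1"] mid_right_monomials[OF n2, of v, symmetric] phi_mult
    by (simp add: algebra_simps)
qed

lemma annihilated_Lmid:
  assumes "a = n"
  shows "annihilated (Lmid n)"
  unfolding annihilated_def
proof (intro allI)
  fix k :: nat and u
  have "has_logderiv (mid_correction n u) 0"
    using has_logderiv_mult[OF has_logderiv_Yp_penultimate[OF assms]]
    by (simp add: mid_correction_def)
  moreover have "has_logderiv (mid_left n u * mid_right n v) 0" for v
    using has_logderiv_mult[OF has_logderiv_mid_left has_logderiv_mid_right] assms by simp
  ultimately have coeff2: "has_logderiv (Lmid n 2 u) 0"
    unfolding Lmid_coeff_2 diff_conv_add_uminus
    by (intro has_logderiv_add_cancel[where g = 0 and h = 0] has_logderiv_neg) simp_all
  have "odd k \<or> k = 0 \<or> k = 2 \<or> (\<exists>m. k = 2 * m + 4)" by presburger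
  then consider "odd k" | "k = 0" | "k = 2" | m where "k = 2 * m + 4" by blast
  then show "has_logderiv (Lmid n k u) 0"
  proof cases
    case 4
    show ?thesis unfolding 4 Lmid_coeff_ge4
      by (intro has_logderiv_sign has_logderiv_mult[where g = 0 and h = 0, simplified]
          has_logderiv_mid_left has_logderiv_mid_right assms)
  qed (simp_all add: Lmid_coeff_odd Lmid_coeff_0 coeff2 has_logderiv_zero has_logderiv_one)
qed

lemma annihilated_Lser_inner:
  assumes "a < n"
  shows "annihilated (Lser n)"
proof -
  have "[1..<n+1] = [1..<a] @ [a..<n+1]"
    using upt_add_eq_append[of 1 a "n + 1 - a"] a_range assms by simp
  also have "[a..<n+1] = [a, a + 1] @ [a + 2..<n+1]"
    using assms by (simp add: upt_conv_Cons)
  finally have split: "[1..<n+1] = [1..<a] @ [a, a + 1] @ [a + 2..<n+1]" .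
  let ?Zbar = "\<lambda>bs. dprod (map (\<lambda>b. fac (zAbar n b)) bs)"
  let ?Z = "\<lambda>bs. dprod (map (\<lambda>b. fac (zA n b)) bs)"
  have far: "annihilated (?Zbar bs)" "annihilated (?Z bs)"
    if "set bs \<subseteq> {1..n} - {a, a + 1}" for bs
    using that by (force intro!: annihilated_dprod annihilated_fac_zA_far annihilated_fac_zAbar_far)+
  have decomp: "?Zbar [1..<n+1] = dmul (?Zbar [1..<a])
      (dmul (dmul (fac (zAbar n a)) (fac (zAbar n (a + 1)))) (?Zbar [a + 2..<n+1]))"
    "?Z (rev [1..<n+1]) = dmul (?Z (rev [a + 2..<n+1]))
      (dmul (dmul (fac (zA n (a + 1))) (fac (zA n a))) (?Z (rev [1..<a])))"
    unfolding split by (simp_all add: dprod_append dmul_assoc)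
  show ?thesis
    unfolding Lser_def decomp
    by (intro annihilated_dmul far annihilated_fac_zA_pair[OF assms] annihilated_fac_zAbar_pair[OF assms]
        annihilated_ginv_z0) (use assms in auto)
qed

lemma annihilated_Lser_last:
  assumes "a = n"
  shows "annihilated (Lser n)"
proof -
  have split: "[1..<n+1] = [1..<n] @ [n]" using n2 by simp
  let ?Zbar = "dprod (map (\<lambda>b. fac (zAbar n b)) [1..<n])"
  let ?Z = "dprod (map (\<lambda>b. fac (zA n b)) (rev [1..<n]))"
  have "Lser n = dmul ?Zbar (dmul (Lmid n) ?Z)"
    unfolding Lser_def Lmid_def split by (simp add: dprod_append dmul_assoc)
  moreover have "annihilated ?Zbar" "annihilated ?Z"
    using assms by (auto intro!: annihilated_dprod annihilated_fac_zA_far annihilated_fac_zAbar_far)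
  ultimately show ?thesis
    using annihilated_dmul annihilated_Lmid[OF assms] by simp
qed

lemma annihilated_Lser: "annihilated (Lser n)"
  using annihilated_Lser_inner annihilated_Lser_last a_range by fastforce

end

theorem mainTheorem11:
  fixes n a :: nat
    and phi :: "lpoly \<Rightarrow> 'r::comm_ring_1"
    and S :: "nat \<Rightarrow> complex \<Rightarrow> 'r"
    and Sa :: "lpoly \<Rightarrow> 'r"
  assumes n2: "n \<ge> 2"
    and a_range: "1 \<le> a" "a \<le> n"
    and phi_one: "phi 1 = 1"
    and phi_add: "\<And>x y. phi (x + y) = phi x + phi y"
    and phi_mult: "\<And>x y. phi (x * y) = phi x * phi y"
    and S_rel: "\<And>b u. 1 \<le> b \<Longrightarrow> b \<le> n \<Longrightarrow>
                  S b (u + dd n b) = phi (Aa n b (u + dd n b / 2)) * S b u"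
    and Sa_add: "\<And>x y. x \<in> Yring n \<Longrightarrow> y \<in> Yring n \<Longrightarrow> Sa (x + y) = Sa x + Sa y"
    and Sa_leibniz: "\<And>x y. x \<in> Yring n \<Longrightarrow> y \<in> Yring n \<Longrightarrow>
                  Sa (x * y) = Sa x * phi y + phi x * Sa y"
    and Sa_gen: "\<And>b u. 1 \<le> b \<Longrightarrow> b \<le> n \<Longrightarrow>
                  Sa (Yp n b u 1) = (if b = a then phi (Yp n b u 1) * S b u else 0)"
  shows "\<forall>j u. Sa (Lser n j u) = 0"
proof -
  interpret screening n a phi S Sa
    using assms by unfold_locales auto
  show ?thesis
    using annihilated_Lser by (simp add: annihilated_def has_logderiv_def)
qed

end
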